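(* Let $f$ be an entire function in the Eremenko–Lyubich class $\mathcal B$ having only finitely many tracts over infinity. If the tracts of $f$ are Hölder, then $f$ has negative spectrum, i.e. $b_\infty(t)<0$ for all $t>\Theta_f$.
   Context: Notation: $\mathbb D_R=\{|z|<R\}$, $\mathbb D_R^*=\{|z|>R\}$, $\mathcal H=\{\Re \xi>0\}$. For an entire $f$, $S(f)$ is the closure of the set of critical values and finite asymptotic values; $f\in\mathcal B$ means $S(f)$ is bounded. For $R>0$ with $S(f)\subset\mathbb D_R$, every component $\Omega_j$ of $f^{-1}(\mathbb D_R^* )$ (a tract) is an unbounded simply connected domain on which $f=R\exp\circ\tau_j$ with $\tau_j:\Omega_j\to\mathcal H$ conformal; set $\varphi_j=\tau_j^{-1}:\mathcal H\to\Omega_j$. For $T>0$ let $Q_T=\{\xi:0<\Re\xi<4T,\ -4T<\Im\xi<4T\}$. Hölder tracts: a conformal map $g$ on $Q_1$ is $(H,\alpha)$-Hölder if $|g(z_1)-g(z_2)|\le H|g'(1)||z_1-z_2|^\alpha$ for all $z_1,z_2\in Q_1$. A tract $\Omega_j$ is Hölder if (i) there is $M$ with $|\varphi_j(\xi)|\le M|\varphi_j(\xi')|$ for all $\xi,\xi'\in Q_T\setminus Q_{T/8}$ and all sufficiently large $T$, and (ii) there are $H,\alpha>0$ and $T_0\ge1$ such that $\xi\mapsto\varphi_j(T\xi)$ on $Q_1$ is $(H,\alpha)$-Hölder for every $T\ge T_0$. $f$ has Hölder tracts if for some $R\ge1$ (with $S(f)\subset \mathbb D_R$) all components of $f^{-1}(\mathbb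 D_R^* )$ are Hölder tracts. Spectrum: for each tract let $\varphi_{j,T}(\xi)=\varphi_j(T\xi)/|\varphi_j(T)|$. For a conformal map $h$ on $Q_2$, $r\in(0,1)$, $t\in\mathbb R$, put $\beta_h(r,t)=\frac{\log\int_{I}|h'(r+iy)|^t\,dy}{\log(1/r)}$ with $I=[-2,-1]\cup[1,2]$. Let $\beta_{\infty,j}(t)=\limsup_{T\to\infty}\beta_{\varphi_{j,T}}(1/T,t)$, $b_{\infty,j}(t)=\beta_{\infty,j}(t)-t+1$, $\Theta_{f,j}=\inf\{t>0:b_{\infty,j}(t)=0\}$, $b_\infty=\max_j b_{\infty,j}$, $\Theta_f=\max_j\Theta_{f,j}$. $f$ has negative spectrum if $b_\infty(t)<0$ for all $t>\Theta_f$. *)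

theory Defs
  imports "HOL-Complex_Analysis.Complex_Analysis"
begin

definition critical_values :: "(complex \<Rightarrow> complex) \<Rightarrow> complex set" where
  "critical_values f = {f z | z. deriv f z = 0}"

definition asymptotic_values :: "(complex \<Rightarrow> complex) \<Rightarrow> complex set" where
  "asymptotic_values f = {a. \<exists>\<gamma> :: real \<Rightarrow> complex.
      continuous_on {0..<1} \<gamma> \<and> filterlim \<gamma> at_infinity (at_left 1) \<and>
      ((\<lambda>s. f (\<gamma> s)) \<longlongrightarrow> a) (at_left 1)}"

definition singular_set :: "(complex \<Rightarrow> complex) \<Rightarrow> complex set" where
  "singular_set f = closure (critical_values f \<union> asymptotic_values f)"

definition class_B :: "(complex \<Rightarrow> complex) \<Rightarrow> bool" where
  "class_B f \<longleftrightarrow> f holomorphic_on UNIV \<and> bounded (singular_set f)"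

definition right_half_plane :: "complex set" where
  "right_half_plane = {\<xi>. Re \<xi> > 0}"

definition tracts :: "(complex \<Rightarrow> complex) \<Rightarrow> real \<Rightarrow> complex set set" where
  "tracts f R = components (f -` {z. norm z > R})"

definition log_coord :: "(complex \<Rightarrow> complex) \<Rightarrow> real \<Rightarrow> complex set \<Rightarrow> (complex \<Rightarrow> complex) \<Rightarrow> bool" where
  "log_coord f R \<Omega> \<tau> \<longleftrightarrow> \<tau> holomorphic_on \<Omega> \<and> bij_betw \<tau> \<Omega> right_half_plane \<and>
     (\<forall>z\<in>\<Omega>. f z = complex_of_real R * exp (\<tau> z))"

definition inv_coord :: "complex set \<Rightarrow> (complex \<Rightarrow> complex) \<Rightarrow> complex \<Rightarrow> complex" where
  "inv_coord \<Omega> \<tau> = inv_into \<Omega> \<tau>"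

definition Qbox :: "real \<Rightarrow> complex set" where
  "Qbox T = {\<xi>. 0 < Re \<xi> \<and> Re \<xi> < 4 * T \<and> - 4 * T < Im \<xi> \<and> Im \<xi> < 4 * T}"

definition holder_Q1 :: "real \<Rightarrow> real \<Rightarrow> (complex \<Rightarrow> complex) \<Rightarrow> bool" where
  "holder_Q1 H \<alpha> g \<longleftrightarrow> (\<forall>z1\<in>Qbox 1. \<forall>z2\<in>Qbox 1.
      cmod (g z1 - g z2) \<le> H * cmod (deriv g 1) * cmod (z1 - z2) powr \<alpha>)"

definition holder_tract :: "(complex \<Rightarrow> complex) \<Rightarrow> bool" where
  "holder_tract \<phi> \<longleftrightarrow>
     (\<exists>M. \<forall>\<^sub>F T in at_top. \<forall>\<xi>\<in>Qbox T - Qbox (T / 8). \<forall>\<xi>'\<in>Qbox T - Qbox (T / 8).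
          cmod (\<phi> \<xi>) \<le> M * cmod (\<phi> \<xi>')) \<and>
     (\<exists>H \<alpha> T0. H > 0 \<and> \<alpha> > 0 \<and> T0 \<ge> 1 \<and>
          (\<forall>T\<ge>T0. holder_Q1 H \<alpha> (\<lambda>\<xi>. \<phi> (complex_of_real T * \<xi>))))"

definition has_holder_tracts :: "(complex \<Rightarrow> complex) \<Rightarrow> real \<Rightarrow> (complex set \<Rightarrow> complex \<Rightarrow> complex) \<Rightarrow> bool" where
  "has_holder_tracts f R \<tau> \<longleftrightarrow>
     (\<forall>\<Omega>\<in>tracts f R. holder_tract (inv_coord \<Omega> (\<tau> \<Omega>)))"

definition I_set :: "real set" where
  "I_set = {-2..-1} \<union> {1..2}"

definition beta :: "(complex \<Rightarrow> complex) \<Rightarrow> real \<Rightarrow> real \<Rightarrow> real" where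
  "beta h r t = ln (integral I_set (\<lambda>y. cmod (deriv h (Complex r y)) powr t)) / ln (1 / r)"

definition rescaled :: "(complex \<Rightarrow> complex) \<Rightarrow> real \<Rightarrow> complex \<Rightarrow> complex" where
  "rescaled \<phi> T = (\<lambda>\<xi>. \<phi> (complex_of_real T * \<xi>) / complex_of_real (cmod (\<phi> (complex_of_real T))))"

definition beta_inf :: "(complex \<Rightarrow> complex) \<Rightarrow> real \<Rightarrow> ereal" where
  "beta_inf \<phi> t = Limsup at_top (\<lambda>T. ereal (beta (rescaled \<phi> T) (1 / T) t))"

definition b_inf_tract :: "(complex \<Rightarrow> complex) \<Rightarrow> real \<Rightarrow> ereal" where
  "b_inf_tract \<phi> t = beta_inf \<phi> t - ereal t + 1"

definition Theta_tract :: "(complex \<Rightarrow> complex) \<Rightarrow> ereal" where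
  "Theta_tract \<phi> = Inf (ereal ` {t. t > 0 \<and> b_inf_tract \<phi> t = 0})"

definition b_inf :: "(complex \<Rightarrow> complex) \<Rightarrow> real \<Rightarrow> (complex set \<Rightarrow> complex \<Rightarrow> complex) \<Rightarrow> real \<Rightarrow> ereal" where
  "b_inf f R \<tau> t = (SUP \<Omega>\<in>tracts f R. b_inf_tract (inv_coord \<Omega> (\<tau> \<Omega>)) t)"

definition Theta_f :: "(complex \<Rightarrow> complex) \<Rightarrow> real \<Rightarrow> (complex set \<Rightarrow> complex \<Rightarrow> complex) \<Rightarrow> ereal" where
  "Theta_f f R \<tau> = (SUP \<Omega>\<in>tracts f R. Theta_tract (inv_coord \<Omega> (\<tau> \<Omega>)))"

definition negative_spectrum :: "(complex \<Rightarrow> complex) \<Rightarrow> real \<Rightarrow> (complex set \<Rightarrow> complex \<Rightarrow> complex) \<Rightarrow> bool" where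
  "negative_spectrum f R \<tau> \<longleftrightarrow> (\<forall>t::real. ereal t > Theta_f f R \<tau> \<longrightarrow> b_inf f R \<tau> t < 0)"

end

theory Submission
  imports Defs
begin

text \<open>
  Write g(xi) = phi(T xi) for the logarithmic coordinate of a Hoelder tract. Comparability of |phi|
  on the annulus Q_T - Q_{T/8} and a Cauchy estimate on the disc of radius 1/4 about 1 give
  |g'(1)| <= 8 M |phi(T)|. On the disc of radius 1/(2T) about a point 1/T + iy with y in I, the
  Hoelder condition bounds the oscillation of g by H |g'(1)| (2T)^(-alpha), so a second Cauchy
  estimate bounds the derivative of the normalised map phi_T there by C T^(1-alpha). Raising
  |phi_T'| from the exponent s to t > s thus costs at most a factor (C T^(1-alpha))^(t-s) in the
  integral over I, whence beta_inf(t) <= beta_inf(s) + (1-alpha)(t-s). Choosing s < t with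
  b_inf(s) = 0 gives b_inf(t) <= -alpha (t-s) < 0, and with finitely many tracts the maximum over
  the tracts is negative as well.
\<close>

lemma integral_I_set_pos:
  fixes u :: "real \<Rightarrow> real"
  assumes cont: "continuous_on I_set u" and pos: "\<And>y. y \<in> I_set \<Longrightarrow> u y > 0"
  shows "u integrable_on I_set" and "integral I_set u > 0"
proof -
  have cont_left: "continuous_on {-2..-1} u" and cont_right: "continuous_on {1..2::real} u"
    using cont unfolding I_set_def by (auto intro: continuous_on_subset)
  have nonneg_left: "integral {-2..-1} u \<ge> 0"
    using pos by (intro integral_nonneg integrable_continuous_real cont_left)
                 (auto simp: I_set_def less_imp_le)
  have nonneg_right: "integral {1..2} u \<ge> 0"
    using pos by (intro integral_nonneg integrable_continuous_real cont_right)
                 (auto simp: I_set_def less_imp_le)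
  have "integral (cbox 1 2) u \<noteq> 0"
  proof
    assume "integral (cbox 1 2) u = 0"
    then have "\<forall>x\<in>cbox 1 2. u x = 0"
      using integral_cbox_eq_0_iff[of 1 2 u] cont_right pos
      by (auto simp: I_set_def less_imp_le)
    then show False
      using pos[of 1] by (simp add: I_set_def)
  qed
  then have pos_right: "integral {1..2} u > 0"
    using nonneg_right by (simp add: cbox_interval)
  have "(u has_integral (integral {-2..-1} u + integral {1..2} u)) I_set"
    unfolding I_set_def
    by (intro has_integral_Un integrable_integral integrable_continuous_real cont_left cont_right)
       auto
  then show "u integrable_on I_set" and "integral I_set u > 0"
    using nonneg_left pos_right by (auto simp: integral_unique)
qed

lemma open_right_half_plane: "open right_half_plane"
  unfolding right_half_plane_def by (rule open_halfspace_Re_gt)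

lemma Qbox_subset_right_half_plane: "Qbox T \<subseteq> right_half_plane"
  by (auto simp: Qbox_def right_half_plane_def)

lemma scaled_in_right_half_plane:
  "T > 0 \<Longrightarrow> \<xi> \<in> right_half_plane \<Longrightarrow> complex_of_real T * \<xi> \<in> right_half_plane"
  by (simp add: right_half_plane_def)

lemma holomorphic_on_scaled:
  assumes "\<phi> holomorphic_on right_half_plane" and "T > 0"
  shows "(\<lambda>\<xi>. \<phi> (complex_of_real T * \<xi>)) holomorphic_on right_half_plane"
  using holomorphic_on_compose_gen[of "\<lambda>\<xi>. complex_of_real T * \<xi>" right_half_plane \<phi>] assms
  by (auto intro!: holomorphic_intros scaled_in_right_half_plane simp: o_def)

lemma holomorphic_on_rescaled:
  "\<phi> holomorphic_on right_half_plane \<Longrightarrow> T > 0 \<Longrightarrow> rescaled \<phi> T holomorphic_on right_half_plane"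
  unfolding rescaled_def by (auto intro!: holomorphic_intros holomorphic_on_scaled)

lemma inj_on_rescaled:
  assumes inj: "inj_on \<phi> right_half_plane" and T: "T > 0" and nz: "\<phi> (complex_of_real T) \<noteq> 0"
  shows "inj_on (rescaled \<phi> T) right_half_plane"
proof (rule inj_onI)
  fix x y assume "x \<in> right_half_plane" "y \<in> right_half_plane"
    and "rescaled \<phi> T x = rescaled \<phi> T y"
  then have "complex_of_real T * x = complex_of_real T * y"
    using nz T scaled_in_right_half_plane by (auto simp: rescaled_def dest: inj_onD[OF inj])
  then show "x = y" using T by simp
qed

lemma eventually_nonzero_on_real_axis:
  assumes inj: "inj_on \<phi> right_half_plane"
  shows "\<forall>\<^sub>F T in at_top. \<phi> (complex_of_real T) \<noteq> 0"
proof (cases "\<exists>T\<^sub>0>0. \<phi> (complex_of_real T\<^sub>0) = 0")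
  case True
  then obtain T\<^sub>0 where "T\<^sub>0 > 0" "\<phi> (complex_of_real T\<^sub>0) = 0" by blast
  then have "\<phi> (complex_of_real T) \<noteq> 0" if "T > T\<^sub>0" for T
    using that inj_onD[OF inj, of "complex_of_real T" "complex_of_real T\<^sub>0"]
    by (auto simp: right_half_plane_def)
  then show ?thesis using eventually_gt_at_top[of T\<^sub>0] by (rule eventually_mono[rotated])
next
  case False
  then show ?thesis by (auto intro: eventually_mono[OF eventually_gt_at_top[of 0]])
qed

lemma norm_deriv_le_of_oscillation:
  assumes holo: "f holomorphic_on S" and "open S" and sub: "cball \<xi> \<rho> \<subseteq> S" and "\<rho> > 0"
    and osc: "\<And>x. dist \<xi> x = \<rho> \<Longrightarrow> norm (f x - f \<xi>) \<le> B"
  shows "norm (deriv f \<xi>) \<le> B / \<rho>"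
proof -
  have holo_diff: "(\<lambda>x. f x - f \<xi>) holomorphic_on S"
    using holo by (intro holomorphic_intros)
  have "norm ((deriv ^^ 1) (\<lambda>x. f x - f \<xi>) \<xi>) \<le> fact 1 * B / \<rho> ^ 1"
    using holo_diff sub osc \<open>\<rho> > 0\<close>
    by (intro Cauchy_inequality)
       (auto intro: holomorphic_on_subset[OF _ subset_trans[OF ball_subset_cball]]
             holomorphic_on_imp_continuous_on simp: dist_norm)
  moreover have "f field_differentiable at \<xi>"
    using holomorphic_on_imp_differentiable_at[OF holo \<open>open S\<close>] sub \<open>\<rho> > 0\<close>
    by (meson centre_in_cball less_imp_le subsetD)
  ultimately show ?thesis by simp
qed

lemma scaled_cball_one_subset_annulus:
  assumes "T > 0" and "dist 1 x \<le> 1/4"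
  shows "complex_of_real T * x \<in> Qbox T - Qbox (T/8)"
proof -
  have "\<bar>1 - Re x\<bar> \<le> 1/4" "\<bar>Im x\<bar> \<le> 1/4"
    using assms(2) abs_Re_le_cmod[of "1 - x"] abs_Im_le_cmod[of "1 - x"] by (auto simp: dist_norm)
  then have "3/4 \<le> Re x" "Re x \<le> 5/4" "-1/4 \<le> Im x" "Im x \<le> 1/4" by arith+
  moreover have "T * (3/4) \<le> T * Re x" "T * Re x \<le> T * (5/4)"
    and "T * (-1/4) \<le> T * Im x" "T * Im x \<le> T * (1/4)"
    using calculation \<open>T > 0\<close> by (meson less_imp_le mult_left_mono)+
  ultimately show ?thesis
    using \<open>T > 0\<close> by (simp add: Qbox_def)
qed

lemma cball_near_segment_subset_Qbox_one:
  assumes "T \<ge> 2" and "y \<in> I_set"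
  shows "cball (Complex (1/T) y) (1/(2*T)) \<subseteq> Qbox 1"
proof
  fix x assume x: "x \<in> cball (Complex (1/T) y) (1/(2*T))"
  define \<rho> where "\<rho> = 1/(2*T)"
  have "0 < \<rho>" "\<rho> \<le> 1/4" "1/T = 2 * \<rho>"
    using assms(1) by (auto simp: \<rho>_def field_simps)
  moreover have "\<bar>1/T - Re x\<bar> \<le> \<rho>" "\<bar>y - Im x\<bar> \<le> \<rho>"
    using x abs_Re_le_cmod[of "Complex (1/T) y - x"] abs_Im_le_cmod[of "Complex (1/T) y - x"]
    by (auto simp: dist_norm \<rho>_def)
  moreover have "\<bar>y\<bar> \<le> 2" using assms(2) by (auto simp: I_set_def)
  ultimately have "0 < Re x" "Re x < 4" "-4 < Im x" "Im x < 4"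
    by linarith+
  then show "x \<in> Qbox 1" by (simp add: Qbox_def)
qed

lemma comparability_constant_ge_one:
  assumes "T > 0" and "\<phi> (complex_of_real T) \<noteq> 0"
    and "\<forall>\<xi>\<in>Qbox T - Qbox (T/8). \<forall>\<xi>'\<in>Qbox T - Qbox (T/8). cmod (\<phi> \<xi>) \<le> M * cmod (\<phi> \<xi>')"
  shows "M \<ge> 1"
  using assms scaled_cball_one_subset_annulus[of T 1] by force

lemma norm_deriv_scaled_at_one_le:
  fixes \<phi> :: "complex \<Rightarrow> complex"
  assumes holo: "\<phi> holomorphic_on right_half_plane" and "T > 0"
    and comparable: "\<forall>\<xi>\<in>Qbox T - Qbox (T/8). \<forall>\<xi>'\<in>Qbox T - Qbox (T/8). cmod (\<phi> \<xi>) \<le> M * cmod (\<phi> \<xi>')"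
  shows "cmod (deriv (\<lambda>\<xi>. \<phi> (complex_of_real T * \<xi>)) 1) \<le> 8 * M * cmod (\<phi> (complex_of_real T))"
proof -
  define g where "g = (\<lambda>\<xi>. \<phi> (complex_of_real T * \<xi>))"
  define c where "c = cmod (\<phi> (complex_of_real T))"
  have T_in_annulus: "complex_of_real T \<in> Qbox T - Qbox (T/8)"
    using scaled_cball_one_subset_annulus[of T 1] \<open>T > 0\<close> by simp
  have "cmod (deriv g 1) \<le> 2 * M * c / (1/4)"
  proof (rule norm_deriv_le_of_oscillation)
    show "g holomorphic_on right_half_plane"
      unfolding g_def using holo \<open>T > 0\<close> by (rule holomorphic_on_scaled)
    show "cball 1 (1/4) \<subseteq> right_half_plane"
      using scaled_cball_one_subset_annulus[of T] Qbox_subset_right_half_plane \<open>T > 0\<close>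
      by (force simp: right_half_plane_def zero_less_mult_iff)
    fix x :: complex assume "dist 1 x = 1/4"
    then have "cmod (g x) \<le> M * c" and "cmod (g 1) \<le> M * c"
      using comparable T_in_annulus scaled_cball_one_subset_annulus[of T x] \<open>T > 0\<close>
      unfolding g_def c_def by auto
    then show "cmod (g x - g 1) \<le> 2 * M * c"
      using norm_triangle_ineq4[of "g x" "g 1"] by linarith
  qed (simp_all add: open_right_half_plane)
  then show ?thesis by (simp add: g_def c_def)
qed

lemma norm_deriv_scaled_near_segment_le:
  fixes \<phi> :: "complex \<Rightarrow> complex"
  assumes holo: "\<phi> holomorphic_on right_half_plane"
    and hoelder: "holder_Q1 H \<alpha> (\<lambda>\<xi>. \<phi> (complex_of_real T * \<xi>))"
    and T: "T \<ge> 2" and y: "y \<in> I_set"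
  shows "cmod (deriv (\<lambda>\<xi>. \<phi> (complex_of_real T * \<xi>)) (Complex (1/T) y))
    \<le> H * cmod (deriv (\<lambda>\<xi>. \<phi> (complex_of_real T * \<xi>)) 1) * (2 * T) powr (1 - \<alpha>)"
proof -
  define g where "g = (\<lambda>\<xi>. \<phi> (complex_of_real T * \<xi>))"
  define \<xi>\<^sub>0 where "\<xi>\<^sub>0 = Complex (1/T) y"
  define \<rho> where "\<rho> = 1/(2*T)"
  have "\<rho> > 0" using T by (simp add: \<rho>_def)
  have ball_in_Qbox: "cball \<xi>\<^sub>0 \<rho> \<subseteq> Qbox 1"
    unfolding \<xi>\<^sub>0_def \<rho>_def using T y by (rule cball_near_segment_subset_Qbox_one)
  have "cmod (deriv g \<xi>\<^sub>0) \<le> H * cmod (deriv g 1) * \<rho> powr \<alpha> / \<rho>"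
  proof (rule norm_deriv_le_of_oscillation)
    show "g holomorphic_on right_half_plane"
      unfolding g_def using holo T by (intro holomorphic_on_scaled) auto
    show "cball \<xi>\<^sub>0 \<rho> \<subseteq> right_half_plane"
      using ball_in_Qbox Qbox_subset_right_half_plane by blast
    fix x assume "dist \<xi>\<^sub>0 x = \<rho>"
    moreover have "x \<in> Qbox 1" and "\<xi>\<^sub>0 \<in> Qbox 1"
      using calculation ball_in_Qbox \<open>\<rho> > 0\<close> by auto
    moreover have "cmod (x - \<xi>\<^sub>0) = \<rho>"
      using calculation by (simp add: dist_norm norm_minus_commute)
    ultimately show "cmod (g x - g \<xi>\<^sub>0) \<le> H * cmod (deriv g 1) * \<rho> powr \<alpha>"
      using hoelder unfolding holder_Q1_def g_def by metis
  qed (use \<open>\<rho> > 0\<close> open_right_half_plane in simp_all)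
  also have "\<rho> powr \<alpha> / \<rho> = (2 * T) powr (1 - \<alpha>)"
  proof -
    have "\<rho> powr \<alpha> / \<rho> = \<rho> powr (\<alpha> - 1)"
      using \<open>\<rho> > 0\<close> by (simp add: powr_diff)
    also have "\<dots> = (2 * T) powr (1 - \<alpha>)"
      using T by (simp add: \<rho>_def powr_divide powr_minus_divide[symmetric])
    finally show ?thesis .
  qed
  then have "H * cmod (deriv g 1) * \<rho> powr \<alpha> / \<rho> = H * cmod (deriv g 1) * (2 * T) powr (1 - \<alpha>)"
    by (metis times_divide_eq_right)
  finally show ?thesis by (simp add: g_def \<xi>\<^sub>0_def)
qed

lemma norm_deriv_rescaled_le:
  fixes \<phi> :: "complex \<Rightarrow> complex"
  assumes holo: "\<phi> holomorphic_on right_half_plane" and "H > 0" and "\<alpha> > 0"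
    and hoelder: "holder_Q1 H \<alpha> (\<lambda>\<xi>. \<phi> (complex_of_real T * \<xi>))"
    and comparable: "\<forall>\<xi>\<in>Qbox T - Qbox (T/8). \<forall>\<xi>'\<in>Qbox T - Qbox (T/8). cmod (\<phi> \<xi>) \<le> M * cmod (\<phi> \<xi>')"
    and T: "T \<ge> 2" and nz: "\<phi> (complex_of_real T) \<noteq> 0" and y: "y \<in> I_set"
  shows "cmod (deriv (rescaled \<phi> T) (Complex (1/T) y)) \<le> 16 * M * H * T powr (1 - \<alpha>)"
proof -
  define g where "g = (\<lambda>\<xi>. \<phi> (complex_of_real T * \<xi>))"
  define c where "c = cmod (\<phi> (complex_of_real T))"
  have "c > 0" using nz by (simp add: c_def)
  have "M \<ge> 1"
    using comparability_constant_ge_one[OF _ nz comparable] T by simp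
  have "rescaled \<phi> T = (\<lambda>\<xi>. g \<xi> / complex_of_real c)"
    unfolding rescaled_def g_def c_def by simp
  moreover have "g field_differentiable at (Complex (1/T) y)"
    using holomorphic_on_scaled[OF holo] T unfolding g_def
    by (intro holomorphic_on_imp_differentiable_at[OF _ open_right_half_plane])
       (auto simp: right_half_plane_def)
  ultimately have "deriv (rescaled \<phi> T) (Complex (1/T) y) = deriv g (Complex (1/T) y) / c"
    by (simp only: deriv_cdivide_right)
  then have "cmod (deriv (rescaled \<phi> T) (Complex (1/T) y)) = cmod (deriv g (Complex (1/T) y)) / c"
    using \<open>c > 0\<close> by (simp add: norm_divide)
  also have "\<dots> \<le> H * cmod (deriv g 1) * (2 * T) powr (1 - \<alpha>) / c"
    using norm_deriv_scaled_near_segment_le[OF holo hoelder T y] \<open>c > 0\<close>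
    unfolding g_def by (simp add: divide_right_mono)
  also have "\<dots> \<le> H * (8 * M * c) * (2 * T) powr (1 - \<alpha>) / c"
    using norm_deriv_scaled_at_one_le[OF holo _ comparable] T \<open>H > 0\<close> \<open>c > 0\<close>
    unfolding g_def c_def by (intro divide_right_mono mult_right_mono mult_left_mono) auto
  also have "\<dots> = 8 * M * H * (2 powr (1 - \<alpha>) * T powr (1 - \<alpha>))"
    using \<open>c > 0\<close> T by (simp add: powr_mult)
  also have "\<dots> \<le> 8 * M * H * (2 * T powr (1 - \<alpha>))"
    using powr_mono[of "1 - \<alpha>" 1 2] \<open>\<alpha> > 0\<close> \<open>M \<ge> 1\<close> \<open>H > 0\<close>
    by (intro mult_left_mono mult_right_mono) auto
  finally show ?thesis by simp
qed

lemma beta_le_of_deriv_bound: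
  fixes h :: "complex \<Rightarrow> complex"
  assumes holo: "h holomorphic_on right_half_plane" and inj: "inj_on h right_half_plane"
    and r: "0 < r" "r < 1"
    and bound: "\<And>y. y \<in> I_set \<Longrightarrow> cmod (deriv h (Complex r y)) \<le> D"
    and "s \<le> t"
  shows "beta h r t \<le> beta h r s + (t - s) * ln D / ln (1/r)"
proof -
  define n where "n = (\<lambda>y. cmod (deriv h (Complex r y)))"
  define A where "A = (\<lambda>p. integral I_set (\<lambda>y. n y powr p))"
  have on_line: "Complex r y \<in> right_half_plane" for y
    using r by (simp add: right_half_plane_def)
  \<comment> \<open>Injectivity makes h' zero-free, so every integrand is positive and the logarithms are
    not the junk value ln 0 = 0.\<close>
  have n_pos: "n y > 0" for y
    using holomorphic_injective_imp_regular[OF holo open_right_half_plane inj on_line]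
    by (simp add: n_def)
  have "continuous_on right_half_plane (deriv h)"
    using holomorphic_deriv[OF holo open_right_half_plane] by (rule holomorphic_on_imp_continuous_on)
  moreover have "continuous_on UNIV (\<lambda>y. Complex r y)"
    unfolding Complex_eq by (intro continuous_intros)
  ultimately have "continuous_on UNIV (\<lambda>y. deriv h (Complex r y))"
    using on_line by (auto intro: continuous_on_compose2)
  then have "continuous_on I_set n"
    unfolding n_def by (auto intro: continuous_on_norm continuous_on_subset)
  then have cont_powr: "continuous_on I_set (\<lambda>y. n y powr p)" for p
    using n_pos by (intro continuous_intros) (auto simp: less_imp_neq[symmetric])
  have integrable: "(\<lambda>y. n y powr p) integrable_on I_set" and A_pos: "A p > 0" for p
    unfolding A_def using integral_I_set_pos[OF cont_powr] n_pos[THEN less_imp_neq[symmetric]] by auto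
  have "(1::real) \<in> I_set" by (simp add: I_set_def)
  then have "D > 0"
    using bound n_pos[of 1] unfolding n_def by (meson less_le_trans)
  have "A t \<le> integral I_set (\<lambda>y. D powr (t - s) * n y powr s)"
    unfolding A_def
  proof (rule integral_le)
    fix y assume "y \<in> I_set"
    then have "n y powr (t - s) * n y powr s \<le> D powr (t - s) * n y powr s"
      using bound n_pos \<open>s \<le> t\<close> by (intro mult_right_mono powr_mono2) (auto simp: n_def)
    then show "n y powr t \<le> D powr (t - s) * n y powr s"
      by (simp add: powr_add[symmetric])
  qed (use integrable integrable_on_mult_right in auto)
  also have "\<dots> = D powr (t - s) * A s"
    unfolding A_def by simp
  finally have "ln (A t) \<le> ln (D powr (t - s) * A s)"
    using A_pos by (rule ln_mono)
  also have "\<dots> = (t - s) * ln D + ln (A s)"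
    using A_pos[of s] \<open>D > 0\<close> by (simp add: ln_mult)
  finally have "ln (A t) / ln (1/r) \<le> ((t - s) * ln D + ln (A s)) / ln (1/r)"
    using r by (intro divide_right_mono) auto
  then show ?thesis
    unfolding beta_def A_def n_def by (simp add: add_divide_distrib)
qed

lemma beta_rescaled_increment_le:
  fixes \<phi> :: "complex \<Rightarrow> complex"
  assumes holo: "\<phi> holomorphic_on right_half_plane" and inj: "inj_on \<phi> right_half_plane"
    and "H > 0" and "\<alpha> > 0"
    and hoelder: "holder_Q1 H \<alpha> (\<lambda>\<xi>. \<phi> (complex_of_real T * \<xi>))"
    and comparable: "\<forall>\<xi>\<in>Qbox T - Qbox (T/8). \<forall>\<xi>'\<in>Qbox T - Qbox (T/8). cmod (\<phi> \<xi>) \<le> M * cmod (\<phi> \<xi>')"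
    and T: "T \<ge> 2" and nz: "\<phi> (complex_of_real T) \<noteq> 0" and "s \<le> t"
  shows "beta (rescaled \<phi> T) (1/T) t
    \<le> beta (rescaled \<phi> T) (1/T) s + (t - s) * (1 - \<alpha> + ln (16 * M * H) / ln T)"
proof -
  have "beta (rescaled \<phi> T) (1/T) t
      \<le> beta (rescaled \<phi> T) (1/T) s + (t - s) * ln (16 * M * H * T powr (1 - \<alpha>)) / ln (1 / (1/T))"
    using T \<open>s \<le> t\<close>
    by (intro beta_le_of_deriv_bound holomorphic_on_rescaled inj_on_rescaled[OF inj _ nz]
          norm_deriv_rescaled_le[OF holo \<open>H > 0\<close> \<open>\<alpha> > 0\<close> hoelder comparable T nz] holo)
       auto
  moreover have "M \<ge> 1"
    using comparability_constant_ge_one[OF _ nz comparable] T by simp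
  ultimately show ?thesis
    using T \<open>H > 0\<close> by (simp add: ln_mult field_simps)
qed

lemma beta_inf_increment_le:
  fixes \<phi> :: "complex \<Rightarrow> complex"
  assumes holo: "\<phi> holomorphic_on right_half_plane" and inj: "inj_on \<phi> right_half_plane"
    and "holder_tract \<phi>"
  obtains \<alpha> where "\<alpha> > 0"
    and "\<And>s t. s \<le> t \<Longrightarrow> beta_inf \<phi> t \<le> beta_inf \<phi> s + ereal ((1 - \<alpha>) * (t - s))"
proof -
  obtain M where comparable: "\<forall>\<^sub>F T in at_top. \<forall>\<xi>\<in>Qbox T - Qbox (T/8). \<forall>\<xi>'\<in>Qbox T - Qbox (T/8).
      cmod (\<phi> \<xi>) \<le> M * cmod (\<phi> \<xi>')"
    using \<open>holder_tract \<phi>\<close> unfolding holder_tract_def by blast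
  obtain H \<alpha> T\<^sub>0 where "H > 0" "\<alpha> > 0"
    and hoelder: "\<And>T. T \<ge> T\<^sub>0 \<Longrightarrow> holder_Q1 H \<alpha> (\<lambda>\<xi>. \<phi> (complex_of_real T * \<xi>))"
    using \<open>holder_tract \<phi>\<close> unfolding holder_tract_def by blast
  have "beta_inf \<phi> t \<le> beta_inf \<phi> s + ereal ((1 - \<alpha>) * (t - s))" if "s \<le> t" for s t
  proof (rule ereal_le_epsilon2)
    fix \<epsilon> :: real assume "\<epsilon> > 0"
    define \<beta>\<^sub>T where "\<beta>\<^sub>T = (\<lambda>p T. ereal (beta (rescaled \<phi> T) (1/T) p))"
    have "((\<lambda>T. (t - s) * ln (16 * M * H) / ln T) \<longlongrightarrow> 0) at_top"
      by (intro tendsto_divide_0[OF tendsto_const] filterlim_at_top_imp_at_infinity ln_at_top)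
    then have "\<forall>\<^sub>F T in at_top. (t - s) * ln (16 * M * H) / ln T < \<epsilon>"
      using \<open>\<epsilon> > 0\<close> by (rule order_tendstoD)
    then have "\<forall>\<^sub>F T in at_top. \<beta>\<^sub>T t T \<le> \<beta>\<^sub>T s T + ereal ((1 - \<alpha>) * (t - s) + \<epsilon>)"
      using comparable eventually_nonzero_on_real_axis[OF inj] eventually_ge_at_top[of "max T\<^sub>0 2"]
    proof eventually_elim
      case (elim T)
      then have "beta (rescaled \<phi> T) (1/T) t
          \<le> beta (rescaled \<phi> T) (1/T) s + (t - s) * (1 - \<alpha> + ln (16 * M * H) / ln T)"
        using \<open>s \<le> t\<close>
        by (intro beta_rescaled_increment_le[OF holo inj \<open>H > 0\<close> \<open>\<alpha> > 0\<close> hoelder]) auto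
      then show ?case
        using elim(1) unfolding \<beta>\<^sub>T_def by (simp add: algebra_simps)
    qed
    then have "Limsup at_top (\<beta>\<^sub>T t) \<le> Limsup at_top (\<lambda>T. \<beta>\<^sub>T s T + ereal ((1 - \<alpha>) * (t - s) + \<epsilon>))"
      by (rule Limsup_mono)
    also have "\<dots> = Limsup at_top (\<beta>\<^sub>T s) + ereal ((1 - \<alpha>) * (t - s) + \<epsilon>)"
      by (rule Limsup_add_ereal_right) auto
    finally show "beta_inf \<phi> t \<le> beta_inf \<phi> s + ereal ((1 - \<alpha>) * (t - s)) + ereal \<epsilon>"
      unfolding beta_inf_def \<beta>\<^sub>T_def by (simp add: add.assoc)
  qed
  then show thesis using \<open>\<alpha> > 0\<close> that by blast
qed

lemma b_inf_tract_neg: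
  fixes \<phi> :: "complex \<Rightarrow> complex"
  assumes "\<phi> holomorphic_on right_half_plane" and "inj_on \<phi> right_half_plane"
    and "holder_tract \<phi>" and "Theta_tract \<phi> < ereal t"
  shows "b_inf_tract \<phi> t < 0"
proof -
  obtain \<alpha> where "\<alpha> > 0"
    and increment: "\<And>s t. s \<le> t \<Longrightarrow> beta_inf \<phi> t \<le> beta_inf \<phi> s + ereal ((1 - \<alpha>) * (t - s))"
    using beta_inf_increment_le assms(1-3) by blast
  obtain s where "s < t" and "b_inf_tract \<phi> s = 0"
    using \<open>Theta_tract \<phi> < ereal t\<close> unfolding Theta_tract_def Inf_less_iff by auto
  then have "beta_inf \<phi> s = ereal (s - 1)"
    unfolding b_inf_tract_def by (cases "beta_inf \<phi> s") auto
  then have "beta_inf \<phi> t \<le> ereal (t - 1 - \<alpha> * (t - s))"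
    using increment[of s t] \<open>s < t\<close> by (simp add: algebra_simps)
  moreover have "\<alpha> * (t - s) > 0" using \<open>\<alpha> > 0\<close> \<open>s < t\<close> by simp
  ultimately show ?thesis
    unfolding b_inf_tract_def by (cases "beta_inf \<phi> t") auto
qed

lemma open_tract:
  assumes "f holomorphic_on UNIV" and "\<Omega> \<in> tracts f R"
  shows "open \<Omega>"
proof -
  have "open {z. R < cmod (f z)}"
    using holomorphic_on_imp_continuous_on[OF assms(1)]
    by (intro open_Collect_less continuous_intros) auto
  then show ?thesis
    using assms(2) unfolding tracts_def vimage_def by (auto intro: open_components)
qed

lemma inv_coord_holomorphic_inj:
  assumes "open \<Omega>" and "log_coord f R \<Omega> \<tau>"
  shows "inv_coord \<Omega> \<tau> holomorphic_on right_half_plane"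
    and "inj_on (inv_coord \<Omega> \<tau>) right_half_plane"
proof -
  have holo: "\<tau> holomorphic_on \<Omega>" and inj: "inj_on \<tau> \<Omega>" and img: "\<tau> ` \<Omega> = right_half_plane"
    using assms(2) unfolding log_coord_def bij_betw_def by auto
  obtain g where "g holomorphic_on \<tau> ` \<Omega>" and g: "\<And>z. z \<in> \<Omega> \<Longrightarrow> g (\<tau> z) = z"
    using holomorphic_has_inverse[OF holo \<open>open \<Omega>\<close> inj] by metis
  moreover have "g w = inv_coord \<Omega> \<tau> w" if "w \<in> \<tau> ` \<Omega>" for w
    using that g inj unfolding inv_coord_def by auto
  ultimately show "inv_coord \<Omega> \<tau> holomorphic_on right_half_plane"
    using img holomorphic_transform by metis
  show "inj_on (inv_coord \<Omega> \<tau>) right_half_plane"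
    unfolding inv_coord_def using img by (auto intro: inj_on_inv_into)
qed

theorem proposition1p1:
  fixes f :: "complex \<Rightarrow> complex" and R :: real
    and \<tau> :: "complex set \<Rightarrow> complex \<Rightarrow> complex"
  assumes "class_B f"
    and "R \<ge> 1"
    and "singular_set f \<subseteq> ball 0 R"
    and "finite (tracts f R)"
    and "\<And>\<Omega>. \<Omega> \<in> tracts f R \<Longrightarrow> log_coord f R \<Omega> (\<tau> \<Omega>)"
    and "has_holder_tracts f R \<tau>"
  shows "negative_spectrum f R \<tau>"
  unfolding negative_spectrum_def
proof (intro allI impI)
  fix t assume t: "Theta_f f R \<tau> < ereal t"
  have "b_inf_tract (inv_coord \<Omega> (\<tau> \<Omega>)) t < 0" if "\<Omega> \<in> tracts f R" for \<Omega>
  proof (rule b_inf_tract_neg)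
    have "open \<Omega>"
      using assms(1) that unfolding class_B_def by (blast intro: open_tract)
    then show "inv_coord \<Omega> (\<tau> \<Omega>) holomorphic_on right_half_plane"
      and "inj_on (inv_coord \<Omega> (\<tau> \<Omega>)) right_half_plane"
      using inv_coord_holomorphic_inj assms(5)[OF that] by blast+
    show "holder_tract (inv_coord \<Omega> (\<tau> \<Omega>))"
      using assms(6) that unfolding has_holder_tracts_def by blast
    have "Theta_tract (inv_coord \<Omega> (\<tau> \<Omega>)) \<le> Theta_f f R \<tau>"
      unfolding Theta_f_def using that by (rule SUP_upper)
    then show "Theta_tract (inv_coord \<Omega> (\<tau> \<Omega>)) < ereal t"
      using t by (rule le_less_trans)
  qed
  then show "b_inf f R \<tau> t < 0"
    using assms(4) unfolding b_inf_def
    by (cases "tracts f R = {}") (simp_all add: bot_ereal_def cSup_eq_Max)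
qed

end
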